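(* Let $t\ge4$ be an integer and consider the Markov chain $(\mu_i)_{i\ge0}$ on $\mathbb{R}$ with transition kernel $P$ such that, given $\mu_{i-1}=\mu$, the random variable $\mu_i\left(1+\mu^2/t\right)^{-1/2}$ has the Student t distribution with $t$ degrees of freedom. Let $V^2(\mu)=\mu^2+1$, let $a>\sqrt{t/(t-3)}$ and $J=[-a,a]$. Then $$PV^2(\mu)\le\begin{cases}\lambda^2V^2(\mu)&\text{for }|\mu|>a,\\ K^2&\text{for }|\mu|\le a,\end{cases}$$ where $$\lambda^2=\frac{1}{t-2}\left(\frac{2t-3}{1+a^2}+1\right),\qquad K^2=2+\frac{a^2+2}{t-2}.$$ Moreover, if $\pi$ denotes the probability distribution on $\mathbb{R}$ with density proportional to $(1+\mu^2/t)^{-t/2}$, then $\pi(V^2)=\frac{2t-3}{t-3}$.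
   Context: This chain is the $\mu$-marginal of the two-step Gibbs sampler for the posterior of $(\mu,\kappa)$ in a normal model with prior $p(\mu,\kappa)\propto\kappa^{-1}$, normalized so that the sample mean is $0$ and $s^2=t$: $\kappa_i\sim\mathrm{Gamma}(t/2,\ \text{rate } (t/2)(t+\mu_{i-1}^2))$, then $\mu_i\sim N(0,1/(\kappa_i t))$. Equivalently the transition density is $p(\mu_i\mid\mu_{i-1})\propto(1+\mu_{i-1}^2/t)^{t/2}(1+\mu_{i-1}^2/t+\mu_i^2/t)^{-(t+1)/2}$ with a proportionality constant depending only on $t$. The distribution $\pi$ is its stationary distribution. $PV^2(\mu)=\int P(\mu,dy)V^2(y)$. *)

theory Defs
  imports "HOL-Probability.Probability"
begin

definition student_t_density :: "real \<Rightarrow> real \<Rightarrow> real" where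
  "student_t_density \<nu> x =
     Gamma ((\<nu> + 1) / 2) / (sqrt (\<nu> * pi) * Gamma (\<nu> / 2)) * (1 + x\<^sup>2 / \<nu>) powr (- (\<nu> + 1) / 2)"

definition student_t :: "real \<Rightarrow> real measure" where
  "student_t \<nu> = density lborel (\<lambda>x. ennreal (student_t_density \<nu> x))"

definition kernelP :: "real \<Rightarrow> real \<Rightarrow> real measure" where
  "kernelP t \<mu> = distr (student_t t) lborel (\<lambda>x. sqrt (1 + \<mu>\<^sup>2 / t) * x)"

definition V2 :: "real \<Rightarrow> real" where
  "V2 \<mu> = \<mu>\<^sup>2 + 1"

definition PV2 :: "real \<Rightarrow> real \<Rightarrow> real" where
  "PV2 t \<mu> = integral\<^sup>L (kernelP t \<mu>) V2"

definition pi_dist :: "real \<Rightarrow> real measure" where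
  "pi_dist t = density lborel (\<lambda>m. ennreal ((1 + m\<^sup>2 / t) powr (- t / 2) /
        (\<integral>u. (1 + u\<^sup>2 / t) powr (- t / 2) \<partial>lborel)))"

end

theory Submission
  imports Defs
begin

text \<open>Both \<open>PV\<^sup>2\<close> and \<open>\<pi>(V\<^sup>2)\<close> reduce to the zeroth and second moments of the kernel
  \<open>(1 + x\<^sup>2/\<nu>)\<^sup>-\<^sup>m\<close> on the real line. The substitution \<open>s = x\<^sup>2/(\<nu> + x\<^sup>2)\<close> turns the
  even moments into Beta integrals, and \<open>B(3/2, m - 3/2) = B(1/2, m - 1/2) / (2m - 3)\<close> gives
  \<open>\<integral> x\<^sup>2 (1 + x\<^sup>2/\<nu>)\<^sup>-\<^sup>m = \<nu>/(2m - 3) \<integral> (1 + x\<^sup>2/\<nu>)\<^sup>-\<^sup>m\<close>.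
  For the Student kernel (\<open>m = (t+1)/2\<close>) this yields \<open>E X\<^sup>2 = t/(t - 2)\<close>, hence
  \<open>PV\<^sup>2(\<mu>) = (V\<^sup>2(\<mu>) + 2t - 3)/(t - 2)\<close>, from which both bounds follow using
  \<open>V\<^sup>2(\<mu>) \<ge> 1 + a\<^sup>2\<close> off \<open>J\<close>; for \<open>\<pi>\<close> (\<open>m = t/2\<close>) it yields \<open>\<pi>(\<mu>\<^sup>2) = t/(t - 3)\<close>.\<close>

lemma has_integral_Beta_real_Ioo:
  fixes a b :: real
  assumes "a > 0" "b > 0"
  shows "((\<lambda>s. s powr (a - 1) * (1 - s) powr (b - 1)) has_integral Beta a b) {0<..<1}"
  using has_integral_Beta_real[OF assms] by (simp add: has_integral_Icc_iff_Ioo)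

lemma Beta_substitution_integrand:
  fixes x \<nu> m :: real and n :: nat
  assumes x: "x > 0" and \<nu>: "\<nu> > 0"
  shows "\<bar>2 * \<nu> * x / (\<nu> + x\<^sup>2)\<^sup>2\<bar> *
           ((x\<^sup>2 / (\<nu> + x\<^sup>2)) powr (real n - 1/2) * (1 - x\<^sup>2 / (\<nu> + x\<^sup>2)) powr (m - real n - 3/2))
         = 2 * \<nu> powr (- (real n + 1/2)) * (x ^ (2 * n) * (1 + x\<^sup>2 / \<nu>) powr (- m))"
    (is "?l = ?r")
proof -
  have D: "\<nu> + x\<^sup>2 > 0" using \<nu> by (simp add: add_pos_nonneg)
  have complement: "1 - x\<^sup>2 / (\<nu> + x\<^sup>2) = \<nu> / (\<nu> + x\<^sup>2)"
    and base: "1 + x\<^sup>2 / \<nu> = (\<nu> + x\<^sup>2) / \<nu>"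
    using \<nu> D by (simp_all add: field_simps)
  have "ln ?l = ln ?r"
    unfolding complement base using x \<nu> D by (simp add: ln_mult ln_div ln_realpow algebra_simps)
  moreover have "?l > 0" "?r > 0"
    unfolding base using x \<nu> D by auto
  ultimately show ?thesis by simp
qed

lemma has_integral_even_moment_half_line:
  fixes \<nu> m :: real and n :: nat
  assumes \<nu>: "\<nu> > 0" and m: "m > real n + 1/2"
  shows "((\<lambda>x. x ^ (2 * n) * (1 + x\<^sup>2 / \<nu>) powr (- m)) has_integral
           \<nu> powr (real n + 1/2) / 2 * Beta (real n + 1/2) (m - real n - 1/2)) {0<..}"
proof -
  define a where "a = real n + 1/2"
  define b where "b = m - real n - 1/2"
  have a: "a > 0" and b: "b > 0" using m by (auto simp: a_def b_def)
  define g where "g x = x\<^sup>2 / (\<nu> + x\<^sup>2)" for x :: real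
  define g' where "g' x = 2 * \<nu> * x / (\<nu> + x\<^sup>2)\<^sup>2" for x :: real
  define f where "f s = s powr (a - 1) * (1 - s) powr (b - 1)" for s :: real
  have pos: "\<nu> + x\<^sup>2 > 0" for x using \<nu> by (simp add: add_pos_nonneg)
  have deriv: "(g has_field_derivative g' x) (at x within {0<..})" for x
    unfolding g_def g'_def
    using pos[of x] by (auto intro!: derivative_eq_intros simp: field_simps power2_eq_square)
  have inj: "inj_on g {0<..}"
  proof (rule inj_onI)
    fix x y :: real assume "x \<in> {0<..}" "y \<in> {0<..}" "g x = g y"
    then have "\<nu> * x\<^sup>2 = \<nu> * y\<^sup>2" "x > 0" "y > 0"
      using pos[of x] pos[of y] by (auto simp: g_def field_simps)
    then show "x = y" using \<nu> by (simp add: power2_eq_iff_nonneg)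
  qed
  have image: "g ` {0<..} = {0<..<1}"
  proof (intro set_eqI iffI)
    fix s assume "s \<in> g ` {0<..}"
    then show "s \<in> {0<..<1}" using pos \<nu> by (auto simp: g_def divide_less_eq)
  next
    fix s :: real assume s: "s \<in> {0<..<1}"
    define x where "x = sqrt (\<nu> * s / (1 - s))"
    have "x > 0" and x2: "x\<^sup>2 = \<nu> * s / (1 - s)" using s \<nu> by (simp_all add: x_def)
    moreover have "g x = s" unfolding g_def x2 using s \<nu> by (simp add: field_simps)
    ultimately show "s \<in> g ` {0<..}" by force
  qed
  have "f absolutely_integrable_on g ` {0<..} \<and> integral (g ` {0<..}) f = Beta a b"
    unfolding image f_def
    using has_integral_Beta_real_Ioo[OF a b]
    by (auto intro!: nonnegative_absolutely_integrable_1 simp: integrable_on_def integral_unique)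
  then have "(\<lambda>x. \<bar>g' x\<bar> * f (g x)) absolutely_integrable_on {0<..} \<and>
      integral {0<..} (\<lambda>x. \<bar>g' x\<bar> * f (g x)) = Beta a b"
    by (subst has_absolute_integral_change_of_variables_1'[OF _ deriv inj]) auto
  then have "((\<lambda>x. \<bar>g' x\<bar> * f (g x)) has_integral Beta a b) {0<..}"
    using set_lebesgue_integral_eq_integral(1) by (metis integrable_integral)
  then have "((\<lambda>x. \<nu> powr a / 2 * (\<bar>g' x\<bar> * f (g x))) has_integral \<nu> powr a / 2 * Beta a b) {0<..}"
    by (rule has_integral_mult_right)
  moreover have "\<nu> powr a / 2 * (\<bar>g' x\<bar> * f (g x)) = x ^ (2 * n) * (1 + x\<^sup>2 / \<nu>) powr (- m)"
    if "x \<in> {0<..}" for x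
    using Beta_substitution_integrand[of x \<nu> n m] that \<nu>
    by (simp add: g_def g'_def f_def a_def b_def powr_minus field_simps)
  ultimately show ?thesis
    unfolding a_def b_def by (rule has_integral_cong[THEN iffD1, rotated])
qed

lemma has_bochner_integral_lborel_indicator_nonneg:
  fixes f :: "real \<Rightarrow> real"
  assumes I: "(f has_integral I) S" and nonneg: "\<And>x. 0 \<le> f x"
    and f: "f \<in> borel_measurable borel" and S: "S \<in> sets borel"
  shows "has_bochner_integral lborel (\<lambda>x. indicator S x *\<^sub>R f x) I"
proof (rule has_bochner_integral_nn_integral)
  have "((\<lambda>x. indicator S x *\<^sub>R f x) has_integral I) UNIV"
    using I by (simp only: indicator_scaleR_eq_if has_integral_restrict_UNIV)
  then show "integral\<^sup>N lborel (\<lambda>x. indicator S x *\<^sub>R f x) = ennreal I"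
    using f S nonneg by (intro nn_integral_has_integral_lborel) auto
  show "0 \<le> I" using I nonneg by (rule has_integral_nonneg)
qed (use f S nonneg in auto)

lemma has_bochner_integral_even_moment:
  fixes \<nu> m :: real and n :: nat
  assumes "\<nu> > 0" and "m > real n + 1/2"
  shows "has_bochner_integral lborel (\<lambda>x. x ^ (2 * n) * (1 + x\<^sup>2 / \<nu>) powr (- m))
           (\<nu> powr (real n + 1/2) * Beta (real n + 1/2) (m - real n - 1/2))"
proof -
  define h where "h x = x ^ (2 * n) * (1 + x\<^sup>2 / \<nu>) powr (- m)" for x :: real
  define I where "I = \<nu> powr (real n + 1/2) / 2 * Beta (real n + 1/2) (m - real n - 1/2)"
  have "(h has_integral I) (interior {0..})"
    using has_integral_even_moment_half_line[OF assms] by (simp add: h_def[abs_def] I_def)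
  then have "(h has_integral I) {0..}" by (subst (asm) has_integral_interior) auto
  then have "has_bochner_integral lborel (\<lambda>x. indicator {0..} x *\<^sub>R h x) I"
    by (rule has_bochner_integral_lborel_indicator_nonneg) (auto simp: h_def[abs_def])
  then have "has_bochner_integral lborel h (2 *\<^sub>R I)"
    by (rule has_bochner_integral_even_function) (simp add: h_def power_mult)
  then show ?thesis by (simp add: h_def[abs_def] I_def)
qed

lemma Beta_plus1_minus1:
  fixes x y :: real
  assumes "x > 0" "y > 1"
  shows "Beta (x + 1) (y - 1) = x / (y - 1) * Beta x y"
proof -
  have x: "x \<notin> \<int>\<^sub>\<le>\<^sub>0" and y: "y - 1 \<notin> \<int>\<^sub>\<le>\<^sub>0"
    using assms by (auto dest: nonpos_Ints_nonpos)
  have "(x + (y - 1)) * ((y - 1) * Beta (x + 1) (y - 1)) = (x + (y - 1)) * (x * Beta x y)"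
    using Beta_plus1_left[OF x, of "y - 1"] Beta_plus1_right[OF y, of x]
    by (simp add: mult.left_commute)
  then have "(y - 1) * Beta (x + 1) (y - 1) = x * Beta x y"
    using assms by simp
  then show ?thesis using assms by (simp add: field_simps)
qed

lemma has_bochner_integral_t_kernel_moments:
  fixes \<nu> m :: real
  assumes \<nu>: "\<nu> > 0" and m: "m > 3/2"
  defines "Z \<equiv> sqrt \<nu> * Beta (1/2) (m - 1/2)"
  shows "Z > 0"
    and "has_bochner_integral lborel (\<lambda>x. (1 + x\<^sup>2 / \<nu>) powr (- m)) Z"
    and "has_bochner_integral lborel (\<lambda>x. x\<^sup>2 * (1 + x\<^sup>2 / \<nu>) powr (- m)) (\<nu> / (2 * m - 3) * Z)"
proof -
  show "Z > 0" using assms by (simp add: Z_def Beta_def)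
  show "has_bochner_integral lborel (\<lambda>x. (1 + x\<^sup>2 / \<nu>) powr (- m)) Z"
    using has_bochner_integral_even_moment[where n=0] assms by (simp add: Z_def powr_half_sqrt)
  have "\<nu> powr (1 + 1/2) = \<nu> * sqrt \<nu>"
    using \<nu> by (subst powr_add) (simp add: powr_half_sqrt)
  moreover have "Beta (1/2 + 1) (m - 1/2 - 1) = 1/2 / (m - 1/2 - 1) * Beta (1/2) (m - 1/2)"
    using m by (intro Beta_plus1_minus1) auto
  ultimately have "\<nu> powr (real 1 + 1/2) * Beta (real 1 + 1/2) (m - real 1 - 1/2) = \<nu> / (2 * m - 3) * Z"
    using m by (simp add: Z_def field_simps)
  moreover have "has_bochner_integral lborel (\<lambda>x. x ^ (2 * 1) * (1 + x\<^sup>2 / \<nu>) powr (- m))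
      (\<nu> powr (real 1 + 1/2) * Beta (real 1 + 1/2) (m - real 1 - 1/2))"
    using assms by (intro has_bochner_integral_even_moment) auto
  ultimately show "has_bochner_integral lborel (\<lambda>x. x\<^sup>2 * (1 + x\<^sup>2 / \<nu>) powr (- m)) (\<nu> / (2 * m - 3) * Z)"
    by simp
qed

lemma has_bochner_integral_student_t_density:
  fixes T :: real
  assumes T: "T > 2"
  shows "has_bochner_integral lborel (student_t_density T) 1"
    and "has_bochner_integral lborel (\<lambda>x. x\<^sup>2 * student_t_density T x) (T / (T - 2))"
proof -
  define c where "c = Gamma ((T + 1) / 2) / (sqrt (T * pi) * Gamma (T / 2))"
  define Z where "Z = sqrt T * Beta (1/2) ((T + 1) / 2 - 1/2)"
  have density: "student_t_density T = (\<lambda>x. c * (1 + x\<^sup>2 / T) powr (- ((T + 1) / 2)))"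
    by (simp add: fun_eq_iff student_t_density_def c_def minus_divide_left)
  have "Z = sqrt T * sqrt pi * Gamma (T / 2) / Gamma ((T + 1) / 2)"
    by (simp add: Z_def Beta_def Gamma_one_half_real add_divide_distrib add.commute)
  moreover have "Gamma (T / 2) \<noteq> 0" "Gamma ((T + 1) / 2) \<noteq> 0"
    using T by (simp_all add: Gamma_real_pos order.strict_implies_not_eq[symmetric])
  ultimately have "c = 1 / Z"
    using T by (simp add: c_def real_sqrt_mult)
  moreover note moments = has_bochner_integral_t_kernel_moments[of T "(T + 1) / 2", folded Z_def]
  ultimately show "has_bochner_integral lborel (student_t_density T) 1"
    and "has_bochner_integral lborel (\<lambda>x. x\<^sup>2 * student_t_density T x) (T / (T - 2))"
    using has_bochner_integral_mult_right[OF moments(2), of c]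
      has_bochner_integral_mult_right[OF moments(3), of c] T
    by (simp_all add: density mult.left_commute[of _ c] add_divide_distrib)
qed

lemma has_bochner_integral_kernelP_V2:
  fixes T \<mu> :: real
  assumes T: "T > 2"
  shows "has_bochner_integral (kernelP T \<mu>) V2 ((T + \<mu>\<^sup>2) / (T - 2) + 1)"
proof -
  define s where "s = sqrt (1 + \<mu>\<^sup>2 / T)"
  have "s\<^sup>2 = 1 + \<mu>\<^sup>2 / T" using T by (simp add: s_def add_nonneg_nonneg)
  then have total: "s\<^sup>2 * (T / (T - 2)) + 1 = (T + \<mu>\<^sup>2) / (T - 2) + 1"
    using T by (simp add: field_simps)
  have "has_bochner_integral lborel
      (\<lambda>x. s\<^sup>2 * (x\<^sup>2 * student_t_density T x) + student_t_density T x) (s\<^sup>2 * (T / (T - 2)) + 1)"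
    using has_bochner_integral_student_t_density[OF T]
    by (intro has_bochner_integral_add has_bochner_integral_mult_right)
  then have "has_bochner_integral lborel (\<lambda>x. student_t_density T x *\<^sub>R V2 (s * x))
      ((T + \<mu>\<^sup>2) / (T - 2) + 1)"
    unfolding total by (simp add: V2_def power_mult_distrib algebra_simps)
  then have "has_bochner_integral (student_t T) (\<lambda>x. V2 (s * x)) ((T + \<mu>\<^sup>2) / (T - 2) + 1)"
    unfolding student_t_def
    by (rule has_bochner_integral_density[rotated 3])
      (use T in \<open>auto simp: V2_def[abs_def] student_t_density_def[abs_def]\<close>)
  then show ?thesis
    unfolding kernelP_def s_def[symmetric]
    by (rule has_bochner_integral_distr[rotated 2]) (auto simp: V2_def[abs_def] student_t_def)
qed

lemma pi_dist_prob_space_and_V2: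
  fixes T :: real
  assumes T: "T > 3"
  shows "prob_space (pi_dist T)"
    and "has_bochner_integral (pi_dist T) V2 ((2 * T - 3) / (T - 3))"
proof -
  define h where "h u = (1 + u\<^sup>2 / T) powr (- T / 2)" for u
  define Z where "Z = sqrt T * Beta (1/2) (T / 2 - 1/2)"
  note moments = has_bochner_integral_t_kernel_moments[of T "T / 2", folded Z_def]
  have Z: "Z > 0" and h: "has_bochner_integral lborel h Z"
    and h2: "has_bochner_integral lborel (\<lambda>x. x\<^sup>2 * h x) (T / (T - 3) * Z)"
    using moments T by (simp_all add: h_def[abs_def])
  have "integral\<^sup>L lborel h = Z" using h by (rule has_bochner_integral_integral_eq)
  then have pi_dist: "pi_dist T = density lborel (\<lambda>x. ennreal (h x / Z))"
    unfolding pi_dist_def h_def[symmetric] by simp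
  have density: "has_bochner_integral lborel (\<lambda>x. h x / Z) 1"
    using has_bochner_integral_divide_zero[OF h, of Z] Z by simp
  have h_nonneg: "0 \<le> h x / Z" for x using Z by (simp add: h_def)
  have h_meas: "(\<lambda>x. h x / Z) \<in> borel_measurable lborel" by (simp add: h_def[abs_def])
  show "prob_space (pi_dist T)"
  proof (rule prob_spaceI)
    have "(\<integral>\<^sup>+x. ennreal (h x / Z) \<partial>lborel) = 1"
      using nn_integral_eq_integral[OF integrable.intros[OF density]] h_nonneg
        has_bochner_integral_integral_eq[OF density] by simp
    then show "emeasure (pi_dist T) (space (pi_dist T)) = 1"
      unfolding pi_dist using h_meas by (simp add: emeasure_density)
  qed
  have "has_bochner_integral lborel (\<lambda>x. (x\<^sup>2 * h x) / Z + h x / Z) (T / (T - 3) + 1)"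
    using has_bochner_integral_divide_zero[OF h2, of Z] density Z
    by (intro has_bochner_integral_add) simp_all
  moreover have "T / (T - 3) + 1 = (2 * T - 3) / (T - 3)"
    using T by (simp add: field_simps)
  moreover have "(\<lambda>x. (x\<^sup>2 * h x) / Z + h x / Z) = (\<lambda>x. (h x / Z) *\<^sub>R V2 x)"
    by (simp add: fun_eq_iff V2_def add_divide_distrib algebra_simps)
  ultimately have "has_bochner_integral lborel (\<lambda>x. (h x / Z) *\<^sub>R V2 x) ((2 * T - 3) / (T - 3))"
    by simp
  then show "has_bochner_integral (pi_dist T) V2 ((2 * T - 3) / (T - 3))"
    unfolding pi_dist
    by (rule has_bochner_integral_density[rotated 3]) (use h_meas h_nonneg in \<open>auto simp: V2_def[abs_def]\<close>)
qed

lemma PV2_eq: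
  fixes T \<mu> :: real
  assumes "T > 2"
  shows "PV2 T \<mu> = (V2 \<mu> + (2 * T - 3)) / (T - 2)"
  using has_bochner_integral_integral_eq[OF has_bochner_integral_kernelP_V2[OF assms]] assms
  by (simp add: PV2_def V2_def field_simps)

lemma PV2_le_drift:
  fixes T a \<mu> :: real
  assumes T: "T > 2" and a: "0 \<le> a" "a < \<bar>\<mu>\<bar>"
  shows "PV2 T \<mu> \<le> 1 / (T - 2) * ((2 * T - 3) / (1 + a\<^sup>2) + 1) * V2 \<mu>"
proof -
  have "a\<^sup>2 < \<bar>\<mu>\<bar>\<^sup>2" using a by (intro power_strict_mono) auto
  then have "1 \<le> V2 \<mu> / (1 + a\<^sup>2)" by (simp add: V2_def add_pos_nonneg)
  then have "(2 * T - 3) * 1 \<le> (2 * T - 3) * (V2 \<mu> / (1 + a\<^sup>2))"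
    using T by (intro mult_left_mono) auto
  then have "V2 \<mu> + (2 * T - 3) \<le> ((2 * T - 3) / (1 + a\<^sup>2) + 1) * V2 \<mu>"
    by (simp add: algebra_simps)
  then show ?thesis
    using T by (simp add: PV2_eq divide_right_mono)
qed

lemma PV2_le_bound:
  fixes T a \<mu> :: real
  assumes T: "T > 2" and a: "\<bar>\<mu>\<bar> \<le> a"
  shows "PV2 T \<mu> \<le> 2 + (a\<^sup>2 + 2) / (T - 2)"
proof -
  have "\<bar>\<mu>\<bar>\<^sup>2 \<le> a\<^sup>2" using a by (intro power_mono) auto
  then have "(V2 \<mu> + (2 * T - 3)) / (T - 2) \<le> (2 * (T - 2) + (a\<^sup>2 + 2)) / (T - 2)"
    using T by (intro divide_right_mono) (auto simp: V2_def)
  also have "\<dots> = 2 + (a\<^sup>2 + 2) / (T - 2)"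
    using T by (simp add: field_simps)
  finally show ?thesis
    using T by (simp add: PV2_eq)
qed

theorem proposition7p1:
  fixes t :: nat and a :: real
  assumes "t \<ge> 4"
    and "a > sqrt (real t / (real t - 3))"
  defines "lam2 \<equiv> (1 / (real t - 2)) * ((2 * real t - 3) / (1 + a\<^sup>2) + 1)"
    and "K2 \<equiv> 2 + (a\<^sup>2 + 2) / (real t - 2)"
  shows "(\<forall>\<mu>. integrable (kernelP (real t) \<mu>) V2)
    \<and> (\<forall>\<mu>. \<bar>\<mu>\<bar> > a \<longrightarrow> PV2 (real t) \<mu> \<le> lam2 * V2 \<mu>)
    \<and> (\<forall>\<mu>. \<bar>\<mu>\<bar> \<le> a \<longrightarrow> PV2 (real t) \<mu> \<le> K2)
    \<and> prob_space (pi_dist (real t))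
    \<and> integrable (pi_dist (real t)) V2
    \<and> integral\<^sup>L (pi_dist (real t)) V2 = (2 * real t - 3) / (real t - 3)"
proof -
  have t: "real t > 3" using assms(1) by simp
  \<comment> \<open>the lower bound on \<open>a\<close> makes \<open>lam2 < 1\<close>; the inequalities themselves only need \<open>a \<ge> 0\<close>\<close>
  have "sqrt (real t / (real t - 3)) \<ge> 0" using t by simp
  then have "a \<ge> 0" using assms(2) by linarith
  then show ?thesis
    using has_bochner_integral_kernelP_V2 pi_dist_prob_space_and_V2[OF t] t
      PV2_le_drift[of "real t" a] PV2_le_bound[of "real t" _ a]
    by (auto simp: lam2_def K2_def has_bochner_integral_iff)
qed

end
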